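(* With notation as in the context (type $E_7$), for every $s\in\{1,3,4,5,6,7\}$: (1) $\Gamma_s^+=\mathcal{L}(z_s)\cap\bigcap_{t\in T,\ s<t\le 7}\mathcal{L}^c(z_t)$; (2) $\Gamma_s^+\oplus z_s=\mathcal{L}(z_7)\cap\bigcap_{t\in T,\ s\le t<7}\mathcal{L}^c(z_t)$, where $T=\{1,3,4,5,6,7\}$ and $\Gamma_s^+\oplus z_s=\{x\oplus z_s: x\in\Gamma_s^+\}$ (empty intersections are omitted).
   Context: Let $F=\{0,1,2,3\}$ be the group $\mathbb{Z}/2\times\mathbb{Z}/2$ with operation $\oplus$ (binary addition without carry) and symplectic form $(a|a')=0$ if $a=0$, $a'=0$ or $a=a'$, and $1$ otherwise. Let $V=F^3$ (elements written $abc$), with coordinatewise $\oplus$ and form $(abc|a'b'c')=(a|a')+(b|b')+(c|c')\in\mathbb{Z}/2$. The T-graph is the graph with vertex set $V$ in which $abc$ and $a'b'c'$ are adjacent iff exactly one of $a=a'$, $b=b'$, $c=c'$ holds. For $v\in V$, $\mathcal{L}(v)$ is the set of vertices adjacent to $v$ in the T-graph, and $\mathcal{L}^c(v)$ is the set of vertices other than $v$ not adjacent to $v$. Let $\Delta$ be the $E_7$ root system with simple roots $\alpha_1,\dots,\alpha_7$, $\langle\alpha_i,\alpha_i\rangle=2$, $\langle\alpha_i,\alpha_j\rangle=-1$ for $\{i,j\}\in\{\{1,3\},\{3,4\},\{4,5\},\{5,6\},\{6,7\},\{2,4\}\}$, $0$ otherwise; $\Lambda=\bigoplus\mathbb{Z}\alpha_i$,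 $\Delta^+$ the positive roots. Let $f:\Lambda\to V$ be the homomorphism with $f(\alpha_1)=100$, $f(\alpha_2)=030$, $f(\alpha_3)=300$, $f(\alpha_4)=111$, $f(\alpha_5)=003$, $f(\alpha_6)=001$, $f(\alpha_7)=033$. For $\beta=\sum\beta^i\alpha_i\in\Delta^+$ let $m(\beta)=\max\{i:\beta^i\ne0\}$; set $\Delta_1^+=\{\alpha_1\}$, $\Delta_3^+=\{\beta: m(\beta)\in\{2,3\}\}$, $\Delta_s^+=\{\beta: m(\beta)=s\}$ for $s=4,\dots,7$, and $\Gamma_s^+=f(\Delta_s^+)$. For $s\in\{1,3,4,5,6,7\}$ let $s'=\max\{3,s+1\}$, $\zeta_s=\sum_{i=s'}^{7}\alpha_i$ (so $\zeta_7=0$), and $z_s=f(\zeta_s)$. *)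

theory Defs
  imports Main
begin

section \<open>The group F = Z/2 x Z/2 (elements 0..3, binary addition without carry) and V = F^3\<close>

type_synonym vec = "nat \<times> nat \<times> nat"

definition Vset :: "vec set" where
  "Vset = {(a, b, c). a < 4 \<and> b < 4 \<and> c < 4}"

definition vxor :: "vec \<Rightarrow> vec \<Rightarrow> vec" where
  "vxor v w = (case v of (a, b, c) \<Rightarrow> case w of (a', b', c') \<Rightarrow>
      (Bit_Operations.xor a a', Bit_Operations.xor b b', Bit_Operations.xor c c'))"

definition tadj :: "vec \<Rightarrow> vec \<Rightarrow> bool" where
  "tadj v w = (v \<in> Vset \<and> w \<in> Vset \<and>
     (case v of (a, b, c) \<Rightarrow> case w of (a', b', c') \<Rightarrow>
        (a = a' \<and> b \<noteq> b' \<and> c \<noteq> c') \<or>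
        (a \<noteq> a' \<and> b = b' \<and> c \<noteq> c') \<or>
        (a \<noteq> a' \<and> b \<noteq> b' \<and> c = c')))"

definition Lnb :: "vec \<Rightarrow> vec set" where
  "Lnb v = {w \<in> Vset. tadj v w}"

definition Lnbc :: "vec \<Rightarrow> vec set" where
  "Lnbc v = {w \<in> Vset. w \<noteq> v \<and> \<not> tadj v w}"

section \<open>The E7 root system; elements of the root lattice are coefficient functions on 1..7\<close>

type_synonym lat = "nat \<Rightarrow> int"

definition e7_edge :: "nat \<Rightarrow> nat \<Rightarrow> bool" where
  "e7_edge i j = ({i, j} \<in> {{1,3}, {3,4}, {4,5}, {5,6}, {6,7}, {2,4}})"

definition gram :: "nat \<Rightarrow> nat \<Rightarrow> int" where
  "gram i j = (if i = j then 2 else if e7_edge i j then -1 else 0)"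

definition ip :: "lat \<Rightarrow> lat \<Rightarrow> int" where
  "ip \<beta> \<gamma> = (\<Sum>i\<in>{1..7}. \<Sum>j\<in>{1..7}. \<beta> i * \<gamma> j * gram i j)"

definition salpha :: "nat \<Rightarrow> lat" where
  "salpha i = (\<lambda>j. if j = i then 1 else 0)"

definition srefl :: "nat \<Rightarrow> lat \<Rightarrow> lat" where
  "srefl i \<beta> = (\<lambda>j. \<beta> j - ip \<beta> (salpha i) * salpha i j)"

inductive_set E7_roots :: "lat set" where
  simple: "i \<in> {1..7} \<Longrightarrow> salpha i \<in> E7_roots"
| reflect: "\<beta> \<in> E7_roots \<Longrightarrow> i \<in> {1..7} \<Longrightarrow> srefl i \<beta> \<in> E7_roots"

definition E7_pos :: "lat set" where
  "E7_pos = {\<beta> \<in> E7_roots. \<forall>j. \<beta> j \<ge> 0}"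

definition fimg :: "nat \<Rightarrow> vec" where
  "fimg i = (if i = 1 then (1,0,0) else if i = 2 then (0,3,0) else if i = 3 then (3,0,0)
     else if i = 4 then (1,1,1) else if i = 5 then (0,0,3) else if i = 6 then (0,0,1)
     else if i = 7 then (0,3,3) else (0,0,0))"

text \<open>Since V is an elementary abelian 2-group, n * x = x for odd n and 0 for even n.\<close>
definition fhom :: "lat \<Rightarrow> vec" where
  "fhom \<beta> = fold (\<lambda>i acc. vxor (if odd (\<beta> i) then fimg i else (0,0,0)) acc) [1..<8] (0,0,0)"

definition mx :: "lat \<Rightarrow> nat" where
  "mx \<beta> = Max {i. \<beta> i \<noteq> 0}"

definition Delta :: "nat \<Rightarrow> lat set" where
  "Delta s = (if s = 1 then {salpha 1}
              else if s = 3 then {\<beta> \<in> E7_pos. mx \<beta> \<in> {2, 3}}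
              else {\<beta> \<in> E7_pos. mx \<beta> = s})"

definition Gamma :: "nat \<Rightarrow> vec set" where
  "Gamma s = fhom ` Delta s"

definition sprime :: "nat \<Rightarrow> nat" where
  "sprime s = max 3 (s + 1)"

definition zeta :: "nat \<Rightarrow> lat" where
  "zeta s = (\<lambda>j. if sprime s \<le> j \<and> j \<le> 7 then 1 else 0)"

definition zs :: "nat \<Rightarrow> vec" where
  "zs s = fhom (zeta s)"

definition Tidx :: "nat set" where
  "Tidx = {1, 3, 4, 5, 6, 7}"

end

(* The root system is finite, so everything is a computation once the 63 positive roots
   are known.  A table of them is certified against the inductive definition of the roots:
   the table and its negatives contain the simple roots and are closed under the simple
   reflections, hence contain every root; conversely each non-simple entry is mapped by some
   simple reflection to an entry of smaller height, so by induction on the height every entry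
   is a root.  With the positive roots known, both identities are verified by evaluating
   Gamma_s^+ and the neighbourhoods of the T-graph on the 64 vertices of V. *)

theory Submission
  imports Defs
begin

definition lat_of_list :: "int list \<Rightarrow> lat" where
  "lat_of_list l j = (if 1 \<le> j \<and> j \<le> 7 then l ! (j - 1) else 0)"

definition simple_root_list :: "nat \<Rightarrow> int list" where
  "simple_root_list i = map (\<lambda>j. if j = i then 1 else 0) [1..<8]"

definition e7_neighbours :: "nat \<Rightarrow> nat list" where
  "e7_neighbours i = [[3], [4], [1, 4], [2, 3, 5], [4, 6], [5, 7], [6]] ! (i - 1)"

definition reflect_list :: "nat \<Rightarrow> int list \<Rightarrow> int list" where
  "reflect_list i l = l[i - 1 := (\<Sum>j\<leftarrow>e7_neighbours i. l ! (j - 1)) - l ! (i - 1)]"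

lemma atLeastAtMost_1_7: "{1..7::nat} = {1, 2, 3, 4, 5, 6, 7}"
  by auto

lemma e7_neighbours_mem:
  "i \<in> {1..7} \<Longrightarrow> j \<in> set (e7_neighbours i) \<Longrightarrow> j \<in> {1..7} \<and> j \<noteq> i"
  unfolding atLeastAtMost_1_7 by (auto simp: e7_neighbours_def)

lemma sum_atLeastAtMost_1_7: "(\<Sum>j\<in>{1..7::nat}. f j) = f 1 + f 2 + f 3 + f 4 + f 5 + f 6 + (f 7 :: int)"
  by (simp add: atLeastAtMostSuc_conv numeral_eq_Suc add.commute add.left_commute)

lemma ip_salpha:
  assumes "i \<in> {1..7}"
  shows "ip \<beta> (salpha i) = 2 * \<beta> i - (\<Sum>j\<leftarrow>e7_neighbours i. \<beta> j)"
proof -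
  have "ip \<beta> (salpha i) = (\<Sum>j\<in>{1..7}. \<beta> j * gram j i)"
    using assms unfolding ip_def salpha_def
    by (simp add: sum.delta if_distrib[of "\<lambda>x. _ * x * _"] cong: if_cong)
  also have "\<dots> = 2 * \<beta> i - (\<Sum>j\<leftarrow>e7_neighbours i. \<beta> j)"
    unfolding sum_atLeastAtMost_1_7 using assms[unfolded atLeastAtMost_1_7]
    by (auto simp: gram_def e7_edge_def e7_neighbours_def doubleton_eq_iff)
  finally show ?thesis .
qed

lemma lat_of_list_simple_root_list: "i \<in> {1..7} \<Longrightarrow> lat_of_list (simple_root_list i) = salpha i"
  by (auto simp: lat_of_list_def simple_root_list_def salpha_def intro!: ext)

lemma sum_e7_neighbours_cong:
  assumes "i \<in> {1..7}" "\<And>j. j \<in> {1..7} \<Longrightarrow> j \<noteq> i \<Longrightarrow> f j = g j"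
  shows "(\<Sum>j\<leftarrow>e7_neighbours i. f j) = (\<Sum>j\<leftarrow>e7_neighbours i. g j)"
  using assms e7_neighbours_mem[OF assms(1)] by (intro arg_cong[of _ _ sum_list] map_cong) auto

lemma srefl_lat_of_list:
  assumes "length l = 7" "i \<in> {1..7}"
  shows "srefl i (lat_of_list l) = lat_of_list (reflect_list i l)"
proof
  fix j
  have neighbours: "(\<Sum>k\<leftarrow>e7_neighbours i. lat_of_list l k) = (\<Sum>k\<leftarrow>e7_neighbours i. l ! (k - 1))"
    using assms(2) by (rule sum_e7_neighbours_cong) (simp add: lat_of_list_def)
  have "srefl i (lat_of_list l) i = (\<Sum>k\<leftarrow>e7_neighbours i. lat_of_list l k) - lat_of_list l i"
    unfolding srefl_def ip_salpha[OF assms(2)] by (simp add: salpha_def)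
  also have "\<dots> = (\<Sum>k\<leftarrow>e7_neighbours i. l ! (k - 1)) - l ! (i - 1)"
    using assms(2) by (simp only: neighbours) (simp add: lat_of_list_def)
  also have "\<dots> = lat_of_list (reflect_list i l) i"
    using assms by (auto simp: lat_of_list_def reflect_list_def)
  finally have "srefl i (lat_of_list l) i = lat_of_list (reflect_list i l) i" .
  moreover have "srefl i (lat_of_list l) j = lat_of_list (reflect_list i l) j" if "j \<noteq> i"
    using that assms by (auto simp: srefl_def salpha_def lat_of_list_def reflect_list_def)
  ultimately show "srefl i (lat_of_list l) j = lat_of_list (reflect_list i l) j"
    by blast
qed

lemma reflect_list_involutive:
  assumes "length l = 7" "i \<in> {1..7}"
  shows "reflect_list i (reflect_list i l) = l"
proof -
  define x where "x = (\<Sum>j\<leftarrow>e7_neighbours i. l ! (j - 1)) - l ! (i - 1)"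
  have "(\<Sum>j\<leftarrow>e7_neighbours i. l[i - 1 := x] ! (j - 1)) = (\<Sum>j\<leftarrow>e7_neighbours i. l ! (j - 1))"
    by (rule sum_e7_neighbours_cong[OF assms(2)]) (use assms in \<open>auto simp: nth_list_update\<close>)
  moreover have "i - 1 < length l"
    using assms by auto
  ultimately show ?thesis
    by (simp add: reflect_list_def flip: x_def) (simp add: x_def)
qed

lemma reflect_list_uminus:
  assumes "length l = 7" "i \<in> {1..7}"
  shows "reflect_list i (map uminus l) = map uminus (reflect_list i l)"
proof -
  have "(\<Sum>j\<leftarrow>e7_neighbours i. map uminus l ! (j - 1)) = - (\<Sum>j\<leftarrow>e7_neighbours i. l ! (j - 1))"
    unfolding uminus_sum_list_map using assms(2) by (rule sum_e7_neighbours_cong) (auto simp: assms(1))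
  then show ?thesis
    using assms by (auto simp: reflect_list_def map_update nth_map algebra_simps)
qed

locale E7_positive_root_table =
  fixes P :: "int list list"
  assumes entries: "\<forall>l\<in>set P. length l = 7 \<and> list_all (\<lambda>x. 0 \<le> x) l \<and> 0 < sum_list l"
    and simple_mem: "\<forall>i\<in>{1..7}. simple_root_list i \<in> set P"
    and reflect_mem: "\<forall>l\<in>set P. \<forall>i\<in>{1..7}.
      reflect_list i l \<in> set P \<or> map uminus (reflect_list i l) \<in> set P"
    and descent: "\<forall>l\<in>set P. l \<in> simple_root_list ` {1..7} \<or>
      (\<exists>i\<in>{1..7}. reflect_list i l \<in> set P \<and> sum_list (reflect_list i l) < sum_list l)"
begin

lemma E7_roots_subset: "E7_roots \<subseteq> lat_of_list ` (set P \<union> map uminus ` set P)"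
proof
  fix \<beta> assume "\<beta> \<in> E7_roots"
  then show "\<beta> \<in> lat_of_list ` (set P \<union> map uminus ` set P)"
  proof induction
    case (simple i)
    then show ?case
      using simple_mem lat_of_list_simple_root_list by (metis UnI1 image_eqI)
  next
    case (reflect \<beta> i)
    then obtain l where l: "l \<in> set P \<union> map uminus ` set P" "\<beta> = lat_of_list l"
      by blast
    have len: "length m = 7" if "m \<in> set P" for m
      using that entries by blast
    have closed: "reflect_list i m \<in> set P \<union> map uminus ` set P" if "m \<in> set P" for m
      using reflect_mem that reflect.hyps(2) by (force simp: image_iff)
    have "reflect_list i l \<in> set P \<union> map uminus ` set P"
      using l(1)
    proof
      assume "l \<in> map uminus ` set P"
      then obtain m where m: "m \<in> set P" "l = map uminus m"
        by blast
      then have "reflect_list i l = map uminus (reflect_list i m)"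
        using len reflect.hyps(2) reflect_list_uminus by blast
      then show ?thesis
        using closed[OF m(1)] by (auto simp: comp_def)
    qed (rule closed)
    moreover have "length l = 7"
      using l(1) len by auto
    ultimately show ?case
      using l(2) reflect.hyps(2) srefl_lat_of_list by auto
  qed
qed

lemma lat_of_list_mem_E7_roots: "l \<in> set P \<Longrightarrow> lat_of_list l \<in> E7_roots"
proof (induction "nat (sum_list l)" arbitrary: l rule: less_induct)
  case less
  then consider (simple) i where "i \<in> {1..7}" "l = simple_root_list i"
    | (lower) i where "i \<in> {1..7}" "reflect_list i l \<in> set P"
        "sum_list (reflect_list i l) < sum_list l"
    using descent by blast
  then show ?case
  proof cases
    case simple
    then show ?thesis
      using E7_roots.simple lat_of_list_simple_root_list by simp
  next
    case lower
    let ?l' = "reflect_list i l"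
    have "0 < sum_list ?l'" "length l = 7" "length ?l' = 7"
      using lower(2) less.prems entries by (auto simp: reflect_list_def)
    then have "lat_of_list ?l' \<in> E7_roots"
      using less.hyps lower by simp
    then have "srefl i (lat_of_list ?l') \<in> E7_roots"
      using lower(1) by (rule E7_roots.reflect)
    then show ?thesis
      using lower(1) \<open>length l = 7\<close> \<open>length ?l' = 7\<close> srefl_lat_of_list reflect_list_involutive
      by simp
  qed
qed

lemma E7_pos_eq: "E7_pos = lat_of_list ` set P"
proof
  show "E7_pos \<subseteq> lat_of_list ` set P"
  proof
    fix \<beta> assume \<beta>: "\<beta> \<in> E7_pos"
    then obtain l where l: "l \<in> set P \<union> map uminus ` set P" "\<beta> = lat_of_list l"
      using E7_roots_subset unfolding E7_pos_def by blast
    have "l \<notin> map uminus ` set P"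
    proof
      assume "l \<in> map uminus ` set P"
      then obtain m where m: "m \<in> set P" "l = map uminus m"
        by blast
      then have "length l = 7" "0 < sum_list m"
        using entries by auto
      moreover have "sum_list l = - sum_list m"
        unfolding m(2) by (induction m) auto
      moreover have "0 \<le> x" if "x \<in> set l" for x
      proof -
        obtain k where "k < 7" "x = l ! k"
          using \<open>x \<in> set l\<close> \<open>length l = 7\<close> by (auto simp: in_set_conv_nth)
        then have "x = \<beta> (k + 1)"
          using l(2) by (simp add: lat_of_list_def)
        then show ?thesis
          using \<beta> by (simp add: E7_pos_def)
      qed
      ultimately show False
        using sum_list_nonneg[of l] by simp
    qed
    then show "\<beta> \<in> lat_of_list ` set P"
      using l by blast
  qed
next
  show "lat_of_list ` set P \<subseteq> E7_pos"
    using lat_of_list_mem_E7_roots entries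
    by (auto simp: E7_pos_def lat_of_list_def list_all_length)
qed

end

definition e7_positive_roots :: "int list list" where
  "e7_positive_roots = [
    [0, 0, 0, 0, 0, 0, 1], [0, 0, 0, 0, 0, 1, 0], [0, 0, 0, 0, 1, 0, 0], [0, 0, 0, 1, 0, 0, 0], [0, 0, 1, 0, 0, 0, 0], [0, 1, 0, 0, 0, 0, 0],
    [1, 0, 0, 0, 0, 0, 0], [0, 0, 0, 0, 0, 1, 1], [0, 0, 0, 0, 1, 1, 0], [0, 0, 0, 1, 1, 0, 0], [0, 0, 1, 1, 0, 0, 0], [0, 1, 0, 1, 0, 0, 0],
    [1, 0, 1, 0, 0, 0, 0], [0, 0, 0, 0, 1, 1, 1], [0, 0, 0, 1, 1, 1, 0], [0, 0, 1, 1, 1, 0, 0], [0, 1, 0, 1, 1, 0, 0], [0, 1, 1, 1, 0, 0, 0],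
    [1, 0, 1, 1, 0, 0, 0], [0, 0, 0, 1, 1, 1, 1], [0, 0, 1, 1, 1, 1, 0], [0, 1, 0, 1, 1, 1, 0], [0, 1, 1, 1, 1, 0, 0], [1, 0, 1, 1, 1, 0, 0],
    [1, 1, 1, 1, 0, 0, 0], [0, 0, 1, 1, 1, 1, 1], [0, 1, 0, 1, 1, 1, 1], [0, 1, 1, 1, 1, 1, 0], [0, 1, 1, 2, 1, 0, 0], [1, 0, 1, 1, 1, 1, 0],
    [1, 1, 1, 1, 1, 0, 0], [0, 1, 1, 1, 1, 1, 1], [0, 1, 1, 2, 1, 1, 0], [1, 0, 1, 1, 1, 1, 1], [1, 1, 1, 1, 1, 1, 0], [1, 1, 1, 2, 1, 0, 0],
    [0, 1, 1, 2, 1, 1, 1], [0, 1, 1, 2, 2, 1, 0], [1, 1, 1, 1, 1, 1, 1], [1, 1, 1, 2, 1, 1, 0], [1, 1, 2, 2, 1, 0, 0], [0, 1, 1, 2, 2, 1, 1],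
    [1, 1, 1, 2, 1, 1, 1], [1, 1, 1, 2, 2, 1, 0], [1, 1, 2, 2, 1, 1, 0], [0, 1, 1, 2, 2, 2, 1], [1, 1, 1, 2, 2, 1, 1], [1, 1, 2, 2, 1, 1, 1],
    [1, 1, 2, 2, 2, 1, 0], [1, 1, 1, 2, 2, 2, 1], [1, 1, 2, 2, 2, 1, 1], [1, 1, 2, 3, 2, 1, 0], [1, 1, 2, 2, 2, 2, 1], [1, 1, 2, 3, 2, 1, 1],
    [1, 2, 2, 3, 2, 1, 0], [1, 1, 2, 3, 2, 2, 1], [1, 2, 2, 3, 2, 1, 1], [1, 1, 2, 3, 3, 2, 1], [1, 2, 2, 3, 2, 2, 1], [1, 2, 2, 3, 3, 2, 1],
    [1, 2, 2, 4, 3, 2, 1], [1, 2, 3, 4, 3, 2, 1], [2, 2, 3, 4, 3, 2, 1]]"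

text \<open>Evaluation of quantifiers over \<open>{1..7}\<close> is very slow; over \<open>set [1..<8]\<close> it is fast.\<close>

lemma atLeastAtMost_1_7_upt: "{1..7::nat} = set [1..<8]"
  by auto

interpretation e7: E7_positive_root_table e7_positive_roots
  by (unfold_locales; (unfold atLeastAtMost_1_7_upt)?; code_simp)

lemma mx_lat_of_list: "mx (lat_of_list l) = Max (set (filter (\<lambda>i. l ! (i - 1) \<noteq> 0) [1..<8]))"
proof -
  have "{i. lat_of_list l i \<noteq> 0} = set (filter (\<lambda>i. l ! (i - 1) \<noteq> 0) [1..<8])"
    by (auto simp: lat_of_list_def)
  then show ?thesis
    by (simp add: mx_def)
qed

lemma Delta_eq:
  "Delta s = lat_of_list ` (if s = 1 then {simple_root_list 1}
     else {l \<in> set e7_positive_roots. mx (lat_of_list l) \<in> (if s = 3 then {2, 3} else {s})})"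
  using lat_of_list_simple_root_list[of 1] by (auto simp: Delta_def e7.E7_pos_eq)

lemma Vset_eq: "Vset = set [0..<4] \<times> set [0..<4] \<times> set [0..<4]"
  by (auto simp: Vset_def)

text \<open>Keeps the membership tests in \<open>tadj\<close> arithmetic during evaluation.\<close>

lemma mem_Vset_iff: "v \<in> Vset \<longleftrightarrow> (case v of (a, b, c) \<Rightarrow> a < 4 \<and> b < 4 \<and> c < 4)"
  by (auto simp: Vset_def split: prod.splits)

lemma Lnb_eq: "Lnb v = {w \<in> set [0..<4] \<times> set [0..<4] \<times> set [0..<4]. tadj v w}"
  unfolding Lnb_def Vset_eq ..

lemma Lnbc_eq: "Lnbc v = {w \<in> set [0..<4] \<times> set [0..<4] \<times> set [0..<4]. w \<noteq> v \<and> \<not> tadj v w}"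
  unfolding Lnbc_def Vset_eq ..

theorem mainTheorem8:
  shows "\<forall>s \<in> Tidx.
     Gamma s = Lnb (zs s) \<inter> (\<Inter>t \<in> {t \<in> Tidx. s < t \<and> t \<le> 7}. Lnbc (zs t)) \<and>
     (\<lambda>x. vxor x (zs s)) ` Gamma s = Lnb (zs 7) \<inter> (\<Inter>t \<in> {t \<in> Tidx. s \<le> t \<and> t < 7}. Lnbc (zs t))"
  unfolding Gamma_def Delta_eq mx_lat_of_list Lnb_eq Lnbc_eq tadj_def mem_Vset_iff
  by code_simp

end
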